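(* For every integer $k\ge 0$ there is a finite set $\mathcal F_k$ of bipartite graphs such that for every graph $G$, $\overline{\mu_\alpha}(G)\le k$ if and only if $G$ is $\mathcal F_k$-free.
   Context: All graphs are finite, simple and undirected. For a graph $G$, $\alpha(G)$ is the maximum size of an independent set and $i(G)$ is the minimum size of a maximal (with respect to inclusion) independent set; the independence gap is $\mu_\alpha(G)=\alpha(G)-i(G)$. The hereditary independence gap is $\overline{\mu_\alpha}(G)=\max\{\mu_\alpha(H): H \text{ an induced subgraph of } G\}$. For a set $\mathcal F$ of graphs, $G$ is $\mathcal F$-free if no induced subgraph of $G$ is isomorphic to a member of $\mathcal F$. *)

theory Defs
  imports Main
begin

type_synonym 'a sgraph = "'a set \<times> ('a \<times> 'a) set"

definition wf_graph :: "'a sgraph \<Rightarrow> bool" where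
  "wf_graph G \<longleftrightarrow> finite (fst G) \<and> snd G \<subseteq> fst G \<times> fst G \<and> sym (snd G) \<and> irrefl (snd G)"

definition independent :: "'a sgraph \<Rightarrow> 'a set \<Rightarrow> bool" where
  "independent G S \<longleftrightarrow> S \<subseteq> fst G \<and> (\<forall>x\<in>S. \<forall>y\<in>S. (x, y) \<notin> snd G)"

definition maximal_independent :: "'a sgraph \<Rightarrow> 'a set \<Rightarrow> bool" where
  "maximal_independent G S \<longleftrightarrow> independent G S \<and>
     (\<forall>T. independent G T \<and> S \<subseteq> T \<longrightarrow> T = S)"

definition alpha :: "'a sgraph \<Rightarrow> nat" where
  "alpha G = Max {card S | S. independent G S}"

definition indep_dom :: "'a sgraph \<Rightarrow> nat" where
  "indep_dom G = Min {card S | S. maximal_independent G S}"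

text \<open>independence gap (note i(G) \<le> alpha(G), so nat subtraction is exact)\<close>
definition mu_alpha :: "'a sgraph \<Rightarrow> nat" where
  "mu_alpha G = alpha G - indep_dom G"

definition induced :: "'a sgraph \<Rightarrow> 'a set \<Rightarrow> 'a sgraph" where
  "induced G U = (U, snd G \<inter> (U \<times> U))"

definition hered_mu_alpha :: "'a sgraph \<Rightarrow> nat" where
  "hered_mu_alpha G = Max {mu_alpha (induced G U) | U. U \<subseteq> fst G}"

definition graph_iso :: "'a sgraph \<Rightarrow> 'b sgraph \<Rightarrow> bool" where
  "graph_iso G H \<longleftrightarrow> (\<exists>f. bij_betw f (fst G) (fst H) \<and>
     (\<forall>x\<in>fst G. \<forall>y\<in>fst G. (x, y) \<in> snd G \<longleftrightarrow> (f x, f y) \<in> snd H))"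

definition has_induced :: "'a sgraph \<Rightarrow> 'b sgraph \<Rightarrow> bool" where
  "has_induced G H \<longleftrightarrow> (\<exists>U. U \<subseteq> fst G \<and> graph_iso (induced G U) H)"

definition free_of :: "'a sgraph \<Rightarrow> 'b sgraph set \<Rightarrow> bool" where
  "free_of G \<F> \<longleftrightarrow> (\<forall>H\<in>\<F>. \<not> has_induced G H)"

definition bipartite :: "'a sgraph \<Rightarrow> bool" where
  "bipartite G \<longleftrightarrow> (\<exists>A B. A \<union> B = fst G \<and> A \<inter> B = {} \<and>
     (\<forall>(x, y)\<in>snd G. (x \<in> A \<and> y \<in> B) \<or> (x \<in> B \<and> y \<in> A)))"

end

theory Submission
  imports Defs
begin

text \<open>
  Let \<open>A\<close> be a maximum independent set and \<open>B\<close> a minimum maximal independent set of a graph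
  with gap at least \<open>m\<close>. Every vertex of \<open>X = A - B\<close> has a neighbour in \<open>Y = B - A\<close>; choosing one
  neighbour \<open>f x\<close> for each \<open>x\<close>, the excess \<open>|X| - |f X| \<ge> m\<close> is realised by some \<open>X' \<subseteq> X\<close>
  with \<open>|X'| = |f X'| + m \<le> 2m\<close>. In the bipartite graph induced by \<open>X' \<union> f X'\<close> the set \<open>f X'\<close>
  dominates \<open>X'\<close>, hence is maximal independent, so the gap is still at least \<open>m\<close> on at most
  \<open>3m\<close> vertices. Hence the bipartite graphs on at most \<open>3(k + 1)\<close> vertices with gap exceeding \<open>k\<close>,
  relabelled onto an initial segment of \<open>nat\<close>, form a suitable finite family.
\<close>

lemma finite_card_set:
  assumes "finite (fst G)" and "\<And>S. P S \<Longrightarrow> S \<subseteq> fst G"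
  shows "finite {card S | S. P S}"
proof (rule finite_subset)
  show "{card S | S. P S} \<subseteq> card ` Pow (fst G)" using assms(2) by blast
qed (use assms(1) in simp)

lemma independent_subset_vertices: "independent G S \<Longrightarrow> S \<subseteq> fst G"
  by (simp add: independent_def)

lemma maximal_independent_subset_vertices: "maximal_independent G S \<Longrightarrow> S \<subseteq> fst G"
  by (simp add: maximal_independent_def independent_def)

lemma finite_independent_cards: "finite (fst G) \<Longrightarrow> finite {card S | S. independent G S}"
  by (rule finite_card_set[OF _ independent_subset_vertices])

lemma finite_maximal_independent_cards:
  "finite (fst G) \<Longrightarrow> finite {card S | S. maximal_independent G S}"
  by (rule finite_card_set[OF _ maximal_independent_subset_vertices])

lemma card_le_alpha: "finite (fst G) \<Longrightarrow> independent G S \<Longrightarrow> card S \<le> alpha G"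
  unfolding alpha_def by (rule Max_ge) (auto intro: finite_independent_cards)

lemma indep_dom_le_card: "finite (fst G) \<Longrightarrow> maximal_independent G S \<Longrightarrow> indep_dom G \<le> card S"
  unfolding indep_dom_def by (rule Min_le) (auto intro: finite_maximal_independent_cards)

lemma alpha_attained:
  assumes "finite (fst G)"
  obtains A where "independent G A" "card A = alpha G"
proof -
  have "independent G {}" by (simp add: independent_def)
  then have "alpha G \<in> {card S | S. independent G S}"
    unfolding alpha_def
    by (intro Max_in finite_independent_cards[OF assms]) auto
  then show thesis using that by auto
qed

lemma maximal_independent_if_card_alpha:
  assumes "finite (fst G)" "independent G A" "card A = alpha G"
  shows "maximal_independent G A"
  unfolding maximal_independent_def
proof (intro conjI allI impI)
  fix T assume T: "independent G T \<and> A \<subseteq> T"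
  then have "finite T" using assms(1) finite_subset independent_subset_vertices by blast
  moreover have "card T \<le> card A" using card_le_alpha[OF assms(1)] T assms(3) by simp
  ultimately show "T = A" using T card_seteq by blast
qed (fact assms(2))

lemma indep_dom_attained:
  assumes "finite (fst G)"
  obtains B where "maximal_independent G B" "card B = indep_dom G"
proof -
  obtain A where "maximal_independent G A"
    using alpha_attained[OF assms] maximal_independent_if_card_alpha[OF assms] by metis
  then have "indep_dom G \<in> {card S | S. maximal_independent G S}"
    unfolding indep_dom_def
    by (intro Min_in finite_maximal_independent_cards[OF assms]) auto
  then show thesis using that by auto
qed

lemma mu_alpha_ge:
  "finite (fst G) \<Longrightarrow> independent G A \<Longrightarrow> maximal_independent G B \<Longrightarrow>
     card A - card B \<le> mu_alpha G"
  unfolding mu_alpha_def using card_le_alpha indep_dom_le_card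
  by (meson diff_le_mono diff_le_mono2 le_trans)

lemma mu_alpha_attained:
  assumes "finite (fst G)"
  obtains A B where "independent G A" "maximal_independent G B" "mu_alpha G = card A - card B"
  using alpha_attained[OF assms] indep_dom_attained[OF assms] unfolding mu_alpha_def by metis

lemma hered_mu_alpha_le_iff:
  assumes "finite (fst G)"
  shows "hered_mu_alpha G \<le> k \<longleftrightarrow> (\<forall>U \<subseteq> fst G. mu_alpha (induced G U) \<le> k)"
proof -
  have "{mu_alpha (induced G U) | U. U \<subseteq> fst G} = (\<lambda>U. mu_alpha (induced G U)) ` Pow (fst G)"
    by auto
  then show ?thesis
    unfolding hered_mu_alpha_def using assms by (subst Max_le_iff) auto
qed

section \<open>Invariance under isomorphism\<close>

definition iso_map :: "('a \<Rightarrow> 'b) \<Rightarrow> 'a sgraph \<Rightarrow> 'b sgraph \<Rightarrow> bool" where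
  "iso_map f G H \<longleftrightarrow> bij_betw f (fst G) (fst H) \<and>
     (\<forall>x\<in>fst G. \<forall>y\<in>fst G. (x, y) \<in> snd G \<longleftrightarrow> (f x, f y) \<in> snd H)"

lemma graph_iso_iff_iso_map: "graph_iso G H \<longleftrightarrow> (\<exists>f. iso_map f G H)"
  by (simp add: graph_iso_def iso_map_def)

lemma iso_map_independent_image_iff:
  assumes "iso_map f G H" "S \<subseteq> fst G"
  shows "independent H (f ` S) \<longleftrightarrow> independent G S"
  using assms unfolding iso_map_def independent_def bij_betw_def by blast

lemma iso_map_maximal_independent_image_iff:
  assumes f: "iso_map f G H" and S: "S \<subseteq> fst G"
  shows "maximal_independent H (f ` S) \<longleftrightarrow> maximal_independent G S"
proof -
  have inj: "inj_on f (fst G)" and onto: "f ` fst G = fst H"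
    using f by (auto simp: iso_map_def bij_betw_def)
  have image_subset_image_iff: "f ` S \<subseteq> f ` T \<longleftrightarrow> S \<subseteq> T" if "T \<subseteq> fst G" for T
    using inj S that by (blast dest: inj_onD)
  show ?thesis
  proof
    assume max: "maximal_independent H (f ` S)"
    show "maximal_independent G S"
      unfolding maximal_independent_def
    proof (intro conjI allI impI)
      show "independent G S"
        using max iso_map_independent_image_iff[OF f S] by (simp add: maximal_independent_def)
      fix T assume T: "independent G T \<and> S \<subseteq> T"
      then have "T \<subseteq> fst G" by (simp add: independent_subset_vertices)
      then have "independent H (f ` T)" "f ` S \<subseteq> f ` T"
        using T iso_map_independent_image_iff[OF f] by auto
      then have "f ` T = f ` S" using max by (simp add: maximal_independent_def)
      then show "T = S" using inj_on_image_eq_iff[OF inj \<open>T \<subseteq> fst G\<close> S] by simp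
    qed
  next
    assume max: "maximal_independent G S"
    show "maximal_independent H (f ` S)"
      unfolding maximal_independent_def
    proof (intro conjI allI impI)
      show "independent H (f ` S)"
        using max iso_map_independent_image_iff[OF f S] by (simp add: maximal_independent_def)
      fix T' assume T': "independent H T' \<and> f ` S \<subseteq> T'"
      then have "T' \<subseteq> f ` fst G" using onto independent_subset_vertices[of H T'] by simp
      then obtain T where T: "T \<subseteq> fst G" "T' = f ` T" unfolding subset_image_iff by blast
      then have "independent G T" "S \<subseteq> T"
        using T' iso_map_independent_image_iff[OF f] image_subset_image_iff by auto
      then have "T = S" using max unfolding maximal_independent_def by blast
      then show "T' = f ` S" using T(2) by simp
    qed
  qed
qed

lemma card_sets_eq_if_bij_betw:
  assumes f: "bij_betw f A B" and P: "\<And>S. P S \<Longrightarrow> S \<subseteq> A" and Q: "\<And>S. Q S \<Longrightarrow> S \<subseteq> B"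
    and PQ: "\<And>S. S \<subseteq> A \<Longrightarrow> Q (f ` S) \<longleftrightarrow> P S"
  shows "{card S | S. Q S} = {card S | S. P S}"
proof -
  have card_f_image: "card (f ` S) = card S" if "S \<subseteq> A" for S
    using f that by (meson bij_betw_def card_image inj_on_subset)
  show ?thesis
  proof (intro set_eqI iffI)
    fix n assume "n \<in> {card T | T. Q T}"
    then obtain T where T: "Q T" "n = card T" by blast
    have "T \<subseteq> f ` A" using Q[OF T(1)] f by (simp add: bij_betw_def)
    then obtain S where "S \<subseteq> A" "T = f ` S" unfolding subset_image_iff by blast
    then show "n \<in> {card S | S. P S}" using T PQ card_f_image by auto
  next
    fix n assume "n \<in> {card S | S. P S}"
    then obtain S where S: "P S" "n = card S" by blast
    then have "Q (f ` S)" "n = card (f ` S)" using P PQ card_f_image by auto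
    then show "n \<in> {card T | T. Q T}" by blast
  qed
qed

lemma mu_alpha_iso:
  assumes "graph_iso G H"
  shows "mu_alpha H = mu_alpha G"
proof -
  obtain f where f: "iso_map f G H" using assms graph_iso_iff_iso_map by blast
  then have bij: "bij_betw f (fst G) (fst H)" by (simp add: iso_map_def)
  have "alpha H = alpha G"
    unfolding alpha_def
    using card_sets_eq_if_bij_betw[where P = "independent G" and Q = "independent H",
        OF bij independent_subset_vertices independent_subset_vertices
        iso_map_independent_image_iff[OF f]] by simp
  moreover have "indep_dom H = indep_dom G"
    unfolding indep_dom_def
    using card_sets_eq_if_bij_betw[where P = "maximal_independent G" and Q = "maximal_independent H",
        OF bij maximal_independent_subset_vertices
        maximal_independent_subset_vertices iso_map_maximal_independent_image_iff[OF f]] by simp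
  ultimately show ?thesis by (simp add: mu_alpha_def)
qed

lemma independent_subset: "independent G A \<Longrightarrow> S \<subseteq> A \<Longrightarrow> independent G S"
  by (auto simp: independent_def)

lemma independent_induced_iff:
  "W \<subseteq> fst G \<Longrightarrow> independent (induced G W) S \<longleftrightarrow> S \<subseteq> W \<and> independent G S"
  unfolding independent_def induced_def by (simp add: subset_iff) blast

lemma induced_induced: "W \<subseteq> U \<Longrightarrow> induced (induced G U) W = induced G W"
  by (auto simp: induced_def)

lemma wf_graph_induced: "wf_graph G \<Longrightarrow> U \<subseteq> fst G \<Longrightarrow> wf_graph (induced G U)"
  by (auto simp: wf_graph_def induced_def sym_def irrefl_def intro: finite_subset)

lemma bipartite_induced_Un:
  assumes "independent G P" "independent G Q" "P \<inter> Q = {}"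
  shows "bipartite (induced G (P \<union> Q))"
  unfolding bipartite_def
proof (intro exI conjI)
  show "\<forall>(x, y) \<in> snd (induced G (P \<union> Q)). x \<in> P \<and> y \<in> Q \<or> x \<in> Q \<and> y \<in> P"
    using assms(1,2) by (auto simp: induced_def independent_def)
qed (use assms(3) in \<open>auto simp: induced_def\<close>)

definition graph_map :: "('a \<Rightarrow> 'b) \<Rightarrow> 'a sgraph \<Rightarrow> 'b sgraph" where
  "graph_map g G = (g ` fst G, map_prod g g ` snd G)"

lemma iso_map_graph_map:
  assumes inj: "inj_on g (fst G)" and edges: "snd G \<subseteq> fst G \<times> fst G"
  shows "iso_map g G (graph_map g G)"
  unfolding iso_map_def graph_map_def
proof (intro conjI ballI iffI)
  fix x y assume x: "x \<in> fst G" and y: "y \<in> fst G"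
    and "(g x, g y) \<in> snd (g ` fst G, map_prod g g ` snd G)"
  then obtain a b where ab: "(a, b) \<in> snd G" "g x = g a" "g y = g b" by auto
  then have "a \<in> fst G" "b \<in> fst G" using edges by auto
  then show "(x, y) \<in> snd G" using ab x y inj by (simp add: inj_on_eq_iff)
qed (use inj in \<open>force simp: bij_betw_def\<close>)+

lemma wf_graph_graph_map:
  assumes inj: "inj_on g (fst G)" and G: "wf_graph G"
  shows "wf_graph (graph_map g G)"
proof -
  have edges: "snd G \<subseteq> fst G \<times> fst G" and "sym (snd G)" "irrefl (snd G)"
    using G by (simp_all add: wf_graph_def)
  have "sym (map_prod g g ` snd G)"
    using \<open>sym (snd G)\<close> by (force simp: sym_def)
  moreover have "irrefl (map_prod g g ` snd G)"
    using \<open>irrefl (snd G)\<close> edges inj by (force simp: irrefl_def inj_on_eq_iff)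
  ultimately show ?thesis
    using G edges by (auto simp: wf_graph_def graph_map_def)
qed

lemma bipartite_graph_map:
  assumes "inj_on g (fst G)" "bipartite G"
  shows "bipartite (graph_map g G)"
proof -
  obtain P Q where PQ: "P \<union> Q = fst G" "P \<inter> Q = {}"
    and edges: "\<forall>(x, y) \<in> snd G. x \<in> P \<and> y \<in> Q \<or> x \<in> Q \<and> y \<in> P"
    using assms(2) unfolding bipartite_def by blast
  show ?thesis
    unfolding bipartite_def graph_map_def
  proof (intro exI conjI)
    show "g ` P \<union> g ` Q = fst (g ` fst G, map_prod g g ` snd G)" using PQ(1) by auto
    show "g ` P \<inter> g ` Q = {}" using inj_on_image_Int[OF assms(1), of P Q] PQ by auto
    show "\<forall>(x, y) \<in> snd (g ` fst G, map_prod g g ` snd G).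
            x \<in> g ` P \<and> y \<in> g ` Q \<or> x \<in> g ` Q \<and> y \<in> g ` P"
      using edges by fastforce
  qed
qed

section \<open>Small bipartite witnesses of a large gap\<close>

lemma maximal_independent_has_neighbour:
  assumes G: "wf_graph G" and B: "maximal_independent G B" and x: "x \<in> fst G - B"
  shows "\<exists>y\<in>B. (x, y) \<in> snd G"
proof (rule ccontr)
  assume no_edge: "\<not> (\<exists>y\<in>B. (x, y) \<in> snd G)"
  have "sym (snd G)" "irrefl (snd G)" using G by (simp_all add: wf_graph_def)
  then have "(x, x) \<notin> snd G" "\<forall>y\<in>B. (y, x) \<notin> snd G"
    using no_edge by (auto simp: irrefl_def dest: symD)
  then have "independent G (insert x B)"
    using B x no_edge by (simp add: maximal_independent_def independent_def)
  then have "insert x B = B" using B unfolding maximal_independent_def by blast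
  then show False using x by blast
qed

lemma maximal_independent_if_dominating:
  assumes B: "independent G B" and dom: "\<And>x. x \<in> fst G - B \<Longrightarrow> \<exists>y\<in>B. (x, y) \<in> snd G"
  shows "maximal_independent G B"
  unfolding maximal_independent_def
proof (intro conjI allI impI)
  fix T assume T: "independent G T \<and> B \<subseteq> T"
  show "T = B"
  proof (rule ccontr)
    assume "T \<noteq> B"
    then obtain x where "x \<in> T - B" using T by blast
    moreover have "T \<subseteq> fst G" using T independent_subset_vertices by blast
    ultimately obtain y where "y \<in> B" "(x, y) \<in> snd G" using dom by blast
    then show False using T \<open>x \<in> T - B\<close> by (auto simp: independent_def)
  qed
qed (fact B)

lemma exists_subset_card_excess_over_image:
  assumes X: "finite X" and excess: "card (f ` X) + m \<le> card X"
  obtains X' where "X' \<subseteq> X" "card X' = card (f ` X') + m" "card (f ` X') \<le> m"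
proof -
  define r where "r = inv_into X f"
  have r: "r y \<in> X" "f (r y) = y" if "y \<in> f ` X" for y
    using that by (simp_all add: r_def inv_into_into f_inv_into_f)
  have inj_r: "inj_on r (f ` X)" unfolding r_def by (rule inj_on_inv_into) simp
  have "r ` f ` X \<subseteq> X" using r by blast
  moreover have "card (r ` f ` X) = card (f ` X)" using card_image[OF inj_r] .
  ultimately have "m \<le> card (X - r ` f ` X)"
    using X excess by (simp add: card_Diff_subset finite_subset)
  then obtain E where E: "E \<subseteq> X - r ` f ` X" "card E = m" "finite E"
    by (rule obtain_subset_with_card_n)
  define X' where "X' = E \<union> r ` f ` E"
  have "X' \<subseteq> X" unfolding X'_def using E r by blast
  moreover have "f ` X' = f ` E"
    unfolding X'_def using E r by (force simp: image_Un)
  moreover have "card X' = card E + card (r ` f ` E)"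
    unfolding X'_def using E by (intro card_Un_disjoint) blast+
  moreover have "card (r ` f ` E) = card (f ` E)"
    using E by (intro card_image inj_on_subset[OF inj_r]) blast
  moreover have "card (f ` E) \<le> m" using E card_image_le by blast
  ultimately show thesis using that E(2) by simp
qed

lemma exists_neighbour_map:
  assumes G: "wf_graph G" and A: "independent G A" and B: "maximal_independent G B"
  obtains f where "\<And>x. x \<in> A - B \<Longrightarrow> f x \<in> B - A \<and> (x, f x) \<in> snd G"
proof -
  have "\<exists>y\<in>B - A. (x, y) \<in> snd G" if x: "x \<in> A - B" for x
  proof -
    have "x \<in> fst G - B" using x A independent_subset_vertices by blast
    then obtain y where y: "y \<in> B" "(x, y) \<in> snd G"
      using maximal_independent_has_neighbour[OF G B] by blast
    moreover have "y \<notin> A" using A x y(2) unfolding independent_def by blast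
    ultimately show ?thesis by blast
  qed
  then show thesis using that by metis
qed

lemma mu_alpha_induced_ge_if_neighbour_map:
  assumes fin: "finite (fst G)" and X: "independent G X" and Y: "independent G (f ` X)"
    and edge: "\<And>x. x \<in> X \<Longrightarrow> (x, f x) \<in> snd G"
  shows "card X - card (f ` X) \<le> mu_alpha (induced G (X \<union> f ` X))"
proof -
  define W where "W = X \<union> f ` X"
  have W: "W \<subseteq> fst G" unfolding W_def using X Y independent_subset_vertices by blast
  have fin_W: "finite (fst (induced G W))"
    using finite_subset[OF W fin] by (simp add: induced_def)
  have indep_W: "independent (induced G W) X" "independent (induced G W) (f ` X)"
    using X Y W by (simp_all add: independent_induced_iff W_def)
  have dominating: "\<exists>y\<in>f ` X. (x, y) \<in> snd (induced G W)"
    if "x \<in> fst (induced G W) - f ` X" for x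
  proof -
    have "x \<in> X" using that by (auto simp: induced_def W_def)
    then show ?thesis using edge unfolding W_def induced_def by auto
  qed
  have "maximal_independent (induced G W) (f ` X)"
    using indep_W(2) dominating by (rule maximal_independent_if_dominating)
  then show ?thesis using mu_alpha_ge[OF fin_W indep_W(1)] by (simp add: W_def)
qed

lemma exists_small_bipartite_gap_witness:
  assumes G: "wf_graph G" and gap: "m \<le> mu_alpha G"
  obtains W where "W \<subseteq> fst G" "card W \<le> 3 * m" "bipartite (induced G W)"
    "m \<le> mu_alpha (induced G W)"
proof -
  have fin: "finite (fst G)" using G by (simp add: wf_graph_def)
  obtain A B where A: "independent G A" and B: "maximal_independent G B"
    and mu: "mu_alpha G = card A - card B"
    using mu_alpha_attained[OF fin] .
  have B_indep: "independent G B" using B by (simp add: maximal_independent_def)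
  have fin_AB: "finite A" "finite B"
    using fin A B_indep independent_subset_vertices finite_subset by blast+
  obtain f where f: "\<And>x. x \<in> A - B \<Longrightarrow> f x \<in> B - A \<and> (x, f x) \<in> snd G"
    using exists_neighbour_map[OF G A B] by blast
  have "card (A - B) = card A - card (A \<inter> B)" "card (B - A) = card B - card (A \<inter> B)"
    using fin_AB by (simp_all add: card_Diff_subset_Int Int_commute)
  moreover have "card (A \<inter> B) \<le> card A" "card (A \<inter> B) \<le> card B"
    using fin_AB by (simp_all add: card_mono)
  moreover have "card (f ` (A - B)) \<le> card (A - B)" using fin_AB by (simp add: card_image_le)
  moreover have "card (f ` (A - B)) \<le> card (B - A)"
    using f fin_AB by (intro card_mono) auto
  ultimately have excess: "card (f ` (A - B)) + m \<le> card (A - B)" using gap mu by linarith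
  have "finite (A - B)" using fin_AB by simp
  then obtain X where X: "X \<subseteq> A - B" "card X = card (f ` X) + m" "card (f ` X) \<le> m"
    using exists_subset_card_excess_over_image[OF _ excess] by blast
  have "f ` X \<subseteq> B - A" using X f by blast
  then have "X \<subseteq> A" "f ` X \<subseteq> B" and disjoint: "X \<inter> f ` X = {}" using X(1) by blast+
  then have indep: "independent G X" "independent G (f ` X)"
    using A B_indep independent_subset by simp_all
  have "X \<union> f ` X \<subseteq> fst G" using indep independent_subset_vertices by blast
  moreover have "card (X \<union> f ` X) \<le> 3 * m" using card_Un_le[of X "f ` X"] X by linarith
  moreover have "bipartite (induced G (X \<union> f ` X))"
    using indep disjoint by (rule bipartite_induced_Un)
  moreover have "m \<le> mu_alpha (induced G (X \<union> f ` X))"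
  proof -
    have "(x, f x) \<in> snd G" if "x \<in> X" for x using f X(1) that by blast
    then have "card X - card (f ` X) \<le> mu_alpha (induced G (X \<union> f ` X))"
      by (rule mu_alpha_induced_ge_if_neighbour_map[OF fin indep])
    then show ?thesis using X(2) by simp
  qed
  ultimately show thesis using that by blast
qed

section \<open>The obstruction family\<close>

definition gap_obstructions :: "nat \<Rightarrow> nat sgraph set" where
  "gap_obstructions k =
     {H. wf_graph H \<and> bipartite H \<and> fst H \<subseteq> {..<3 * (k + 1)} \<and> k < mu_alpha H}"

lemma finite_gap_obstructions: "finite (gap_obstructions k)"
proof (rule finite_subset)
  let ?V = "{..<3 * (k + 1)}"
  show "gap_obstructions k \<subseteq> Pow ?V \<times> Pow (?V \<times> ?V)"
    by (auto simp: gap_obstructions_def wf_graph_def)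
qed simp

lemma free_of_gap_obstructions_if_hered_mu_alpha_le:
  assumes G: "wf_graph G" and le: "hered_mu_alpha G \<le> k"
  shows "free_of G (gap_obstructions k)"
  unfolding free_of_def
proof (intro ballI notI)
  fix H assume H: "H \<in> gap_obstructions k" and "has_induced G H"
  then obtain U where U: "U \<subseteq> fst G" "graph_iso (induced G U) H"
    unfolding has_induced_def by blast
  have "finite (fst G)" using G by (simp add: wf_graph_def)
  then have "mu_alpha (induced G U) \<le> k" using le U(1) hered_mu_alpha_le_iff by blast
  then show False using H mu_alpha_iso[OF U(2)] by (simp add: gap_obstructions_def)
qed

lemma not_free_of_gap_obstructions:
  assumes G: "wf_graph G" and W: "W \<subseteq> fst G" "card W \<le> 3 * (k + 1)"
    and bip: "bipartite (induced G W)" and gap: "k < mu_alpha (induced G W)"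
  shows "\<not> free_of G (gap_obstructions k)"
proof -
  have W_wf: "wf_graph (induced G W)" using wf_graph_induced[OF G W(1)] .
  then have "finite W" by (simp add: wf_graph_def induced_def)
  then obtain g where g: "bij_betw g W {0..<card W}" using ex_bij_betw_finite_nat by blast
  then have inj: "inj_on g (fst (induced G W))" by (simp add: bij_betw_def induced_def)
  define H where "H = graph_map g (induced G W)"
  have iso: "graph_iso (induced G W) H"
    unfolding H_def graph_iso_iff_iso_map
    using iso_map_graph_map[OF inj] by (auto simp: induced_def)
  have "fst H = {0..<card W}" using g by (simp add: H_def graph_map_def induced_def bij_betw_def)
  then have "H \<in> gap_obstructions k"
    using wf_graph_graph_map[OF inj W_wf] bipartite_graph_map[OF inj bip] W(2) gap
      mu_alpha_iso[OF iso]
    unfolding gap_obstructions_def H_def by auto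
  moreover have "has_induced G H" unfolding has_induced_def using iso W(1) by blast
  ultimately show ?thesis by (auto simp: free_of_def)
qed

lemma hered_mu_alpha_le_if_free_of_gap_obstructions:
  assumes G: "wf_graph G" and free: "free_of G (gap_obstructions k)"
  shows "hered_mu_alpha G \<le> k"
proof -
  have "mu_alpha (induced G U) \<le> k" if U: "U \<subseteq> fst G" for U
  proof (rule ccontr)
    assume "\<not> mu_alpha (induced G U) \<le> k"
    then have "k + 1 \<le> mu_alpha (induced G U)" by simp
    then obtain W where W: "W \<subseteq> fst (induced G U)" "card W \<le> 3 * (k + 1)"
      "bipartite (induced (induced G U) W)" "k + 1 \<le> mu_alpha (induced (induced G U) W)"
      using exists_small_bipartite_gap_witness[OF wf_graph_induced[OF G U]] by blast
    have "W \<subseteq> U" using W(1) by (simp add: induced_def)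
    then have "W \<subseteq> fst G" and "induced (induced G U) W = induced G W"
      using U by (auto simp: induced_induced)
    then show False
      using not_free_of_gap_obstructions[OF G _ W(2)] W(3,4) free by simp
  qed
  moreover have "finite (fst G)" using G by (simp add: wf_graph_def)
  ultimately show ?thesis using hered_mu_alpha_le_iff by blast
qed

theorem mainTheorem15:
  fixes k :: nat
  shows "\<exists>\<F> :: nat sgraph set. finite \<F> \<and> (\<forall>H\<in>\<F>. wf_graph H \<and> bipartite H) \<and>
           (\<forall>G :: nat sgraph. wf_graph G \<longrightarrow> (hered_mu_alpha G \<le> k \<longleftrightarrow> free_of G \<F>))"
proof (intro exI conjI allI impI)
  show "finite (gap_obstructions k)" by (rule finite_gap_obstructions)
  show "\<forall>H\<in>gap_obstructions k. wf_graph H \<and> bipartite H"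
    by (simp add: gap_obstructions_def)
  fix G :: "nat sgraph" assume "wf_graph G"
  then show "hered_mu_alpha G \<le> k \<longleftrightarrow> free_of G (gap_obstructions k)"
    using free_of_gap_obstructions_if_hered_mu_alpha_le
      hered_mu_alpha_le_if_free_of_gap_obstructions by blast
qed

end
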